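(* Suppose $\mu$ is a singular limit of strongly compact cardinals and $\lambda>\mu$ is a regular cardinal. If $S=\langle I\times\kappa,\mathcal{R}\rangle$ is a strong $\lambda$-system with $\kappa\le\mu$ and $|\mathcal{R}|<\mu$, then $S$ has a cofinal branch. In particular, $\mu^+$ satisfies the strong system property.
   Context: Let $\lambda$ be an infinite regular cardinal. A relation $R$ is tree-like if $a<_R c$ and $b<_R c$ imply $a,b$ are $R$-comparable ($a=b$, $a<_Rb$ or $b<_Ra$). A $\lambda$-system $\langle I\times\kappa,\mathcal{R}\rangle$ consists of an unbounded $I\subseteq\lambda$, $0<\kappa<\lambda$, levels $S_\alpha=\{\alpha\}\times\kappa$ for $\alpha\in I$ (with $S$ denoting their union), and a set $\mathcal{R}$ of binary transitive tree-like relations on $S$ with $|\mathcal{R}|<\lambda$, such that $(\alpha_0,\beta_0)<_R(\alpha_1,\beta_1)$ implies $\alpha_0<\alpha_1$, and for all $\alpha_0<\alpha_1$ in $I$ there are $\beta_0,\beta_1<\kappa$ and $R\in\mathcal{R}$ with $(\alpha_0,\beta_0)<_R(\alpha_1,\beta_1)$. It is strong if for all $\alpha_0<\alpha_1$ in $I$ and every $\beta_1<\kappa$ there are $\beta_0<\kappa$, $R\in\mathcal{R}$ with $(\alpha_0,\beta_0)<_R(\alpha_1,\beta_1)$. A branch through $R$ is a set of pairwise $R$-comparable elements; cofinal if it meets $S_\alpha$ for unboundedly many $\alpha\in I$. A regular $\lambda$ satisfies the strong system property if every strong $\lambda$-system $\langle I\times\kappa,\mathcal{R}\rangle$ with $|\mathcal{R}|^+<\lambda$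 has a cofinal branch. *)

theory Defs
  imports Main
begin

unbundle cardinal_syntax

text \<open>Ordinals are represented by the elements of a type 'u, ordered by a well-order
  r on UNIV. The ordinal a is identified with its set of predecessors underS r a.\<close>

definition ord_card :: "'u rel \<Rightarrow> 'u \<Rightarrow> bool" where
  "ord_card r a \<longleftrightarrow> (\<forall>b \<in> underS r a. |underS r b| <o |underS r a| )"

definition infinite_card :: "'u rel \<Rightarrow> 'u \<Rightarrow> bool" where
  "infinite_card r a \<longleftrightarrow> ord_card r a \<and> infinite (underS r a)"

definition unbounded_in :: "'u rel \<Rightarrow> 'u set \<Rightarrow> 'u \<Rightarrow> bool" where
  "unbounded_in r A l \<longleftrightarrow> A \<subseteq> underS r l \<and> (\<forall>a \<in> underS r l. \<exists>b \<in> A. (a, b) \<in> r)"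

definition regular_card :: "'u rel \<Rightarrow> 'u \<Rightarrow> bool" where
  "regular_card r l \<longleftrightarrow> infinite_card r l \<and>
     (\<forall>A. unbounded_in r A l \<longrightarrow> |A| =o |underS r l| )"

definition singular_card :: "'u rel \<Rightarrow> 'u \<Rightarrow> bool" where
  "singular_card r l \<longleftrightarrow> infinite_card r l \<and> \<not> regular_card r l"

definition is_card_succ :: "'u rel \<Rightarrow> 'u \<Rightarrow> 'u \<Rightarrow> bool" where
  "is_card_succ r m l \<longleftrightarrow> ord_card r l \<and> m \<in> underS r l \<and>
     (\<forall>g \<in> underS r l. |underS r g| \<le>o |underS r m| )"

definition P_kappa :: "'u rel \<Rightarrow> 'u \<Rightarrow> 'u set \<Rightarrow> 'u set set" where
  "P_kappa r k X = {a. a \<subseteq> X \<and> |a| <o |underS r k| }"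

definition complete_ultrafilter :: "'u rel \<Rightarrow> 'u \<Rightarrow> 'a set \<Rightarrow> 'a set set \<Rightarrow> bool" where
  "complete_ultrafilter r k P U \<longleftrightarrow>
     U \<subseteq> Pow P \<and> P \<in> U \<and> {} \<notin> U \<and>
     (\<forall>A B. A \<in> U \<and> A \<subseteq> B \<and> B \<subseteq> P \<longrightarrow> B \<in> U) \<and>
     (\<forall>A. A \<subseteq> P \<longrightarrow> A \<in> U \<or> P - A \<in> U) \<and>
     (\<forall>F. F \<subseteq> U \<and> F \<noteq> {} \<and> |F| <o |underS r k| \<longrightarrow> \<Inter>F \<in> U)"

definition fine_measure :: "'u rel \<Rightarrow> 'u \<Rightarrow> 'u set \<Rightarrow> 'u set set set \<Rightarrow> bool" where
  "fine_measure r k X U \<longleftrightarrow> complete_ultrafilter r k (P_kappa r k X) U \<and>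
     (\<forall>x \<in> X. {a \<in> P_kappa r k X. x \<in> a} \<in> U)"

text \<open>Strong compactness, relativized to the sets of type 'u.\<close>

definition strongly_compact :: "'u rel \<Rightarrow> 'u \<Rightarrow> bool" where
  "strongly_compact r k \<longleftrightarrow> regular_card r k \<and> \<not> ( |underS r k| \<le>o |UNIV :: nat set| ) \<and>
     (\<forall>X :: 'u set. \<exists>U. fine_measure r k X U)"

definition singular_limit_of_strongly_compacts :: "'u rel \<Rightarrow> 'u \<Rightarrow> bool" where
  "singular_limit_of_strongly_compacts r m \<longleftrightarrow> singular_card r m \<and>
     (\<forall>a \<in> underS r m. \<exists>k \<in> underS r m. a \<in> underS r k \<and> strongly_compact r k)"

text \<open>lambda-systems. The underlying set is S = I \<times> k, level S_a = {a} \<times> k.\<close>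

definition tree_like :: "'a rel \<Rightarrow> bool" where
  "tree_like R \<longleftrightarrow> (\<forall>a b c. (a, c) \<in> R \<and> (b, c) \<in> R \<longrightarrow> a = b \<or> (a, b) \<in> R \<or> (b, a) \<in> R)"

definition lambda_system :: "'u rel \<Rightarrow> 'u \<Rightarrow> 'u set \<Rightarrow> 'u \<Rightarrow> ('u \<times> 'u) rel set \<Rightarrow> bool" where
  "lambda_system r l I k \<R> \<longleftrightarrow>
     unbounded_in r I l \<and> underS r k \<noteq> {} \<and> k \<in> underS r l \<and> |\<R>| <o |underS r l| \<and>
     (\<forall>R \<in> \<R>. R \<subseteq> (I \<times> underS r k) \<times> (I \<times> underS r k) \<and> trans R \<and> tree_like R \<and>
        (\<forall>a0 b0 a1 b1. ((a0, b0), (a1, b1)) \<in> R \<longrightarrow> a0 \<in> underS r a1)) \<and>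
     (\<forall>a0 \<in> I. \<forall>a1 \<in> I. a0 \<in> underS r a1 \<longrightarrow>
        (\<exists>b0 \<in> underS r k. \<exists>b1 \<in> underS r k. \<exists>R \<in> \<R>. ((a0, b0), (a1, b1)) \<in> R))"

definition strong_lambda_system :: "'u rel \<Rightarrow> 'u \<Rightarrow> 'u set \<Rightarrow> 'u \<Rightarrow> ('u \<times> 'u) rel set \<Rightarrow> bool" where
  "strong_lambda_system r l I k \<R> \<longleftrightarrow> lambda_system r l I k \<R> \<and>
     (\<forall>a0 \<in> I. \<forall>a1 \<in> I. a0 \<in> underS r a1 \<longrightarrow>
        (\<forall>b1 \<in> underS r k. \<exists>b0 \<in> underS r k. \<exists>R \<in> \<R>. ((a0, b0), (a1, b1)) \<in> R))"

definition is_branch :: "'u rel \<Rightarrow> 'u set \<Rightarrow> 'u \<Rightarrow> ('u \<times> 'u) rel \<Rightarrow> ('u \<times> 'u) set \<Rightarrow> bool" where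
  "is_branch r I k R b \<longleftrightarrow> b \<subseteq> I \<times> underS r k \<and>
     (\<forall>x \<in> b. \<forall>y \<in> b. x = y \<or> (x, y) \<in> R \<or> (y, x) \<in> R)"

definition has_cofinal_branch :: "'u rel \<Rightarrow> 'u \<Rightarrow> 'u set \<Rightarrow> 'u \<Rightarrow> ('u \<times> 'u) rel set \<Rightarrow> bool" where
  "has_cofinal_branch r l I k \<R> \<longleftrightarrow>
     (\<exists>R \<in> \<R>. \<exists>b. is_branch r I k R b \<and> unbounded_in r {a \<in> I. \<exists>c. (a, c) \<in> b} l)"

text \<open>|R|^+ < l is expressed as: some ordinal g < l has |R| < |g|.\<close>

definition strong_system_property :: "'u rel \<Rightarrow> 'u \<Rightarrow> bool" where
  "strong_system_property r l \<longleftrightarrow> regular_card r l \<and>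
     (\<forall>I k \<R>. strong_lambda_system r l I k \<R> \<and> (\<exists>g \<in> underS r l. |\<R>| <o |underS r g| ) \<longrightarrow>
        has_cofinal_branch r l I k \<R>)"

end

theory Submission
  imports Defs
begin

(* Let nu < mu be strongly compact above the number of colours involved.  Pushing a fine nu-complete
   measure on P_nu(I) forward along a map that sends each small set to an index above it gives a
   nu-complete ultrafilter on I containing all tails.  Colour each pair alpha < beta of indices by the
   relation and (the class of) the level-alpha predecessor of a fixed node d0 on level beta.  Almost all
   beta agree on the colour of alpha; by regularity of lambda one colour occurs for unboundedly many
   alpha, and any two of them share some beta, so tree-likeness makes their predecessors comparable.
   Since kappa may exceed every strongly compact below mu, the nodes are first grouped into fewer than
   mu classes of size < mu along a short cofinal subset of the singular mu; the argument then yields a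
   subsystem of width < mu with a single relation, and a second strongly compact above that width
   produces a cofinal branch. *)

unbundle cardinal_syntax

lemma wo_in_underS_iff:
  assumes "well_order r"
  shows "x \<in> underS r a \<longleftrightarrow> (a, x) \<notin> r"
proof -
  have "antisym r" "total r" "refl r"
    using assms by (auto simp: well_order_on_def linear_order_on_def partial_order_on_def preorder_on_def)
  then have "(x, a) \<in> r \<Longrightarrow> (a, x) \<in> r \<Longrightarrow> x = a" "x \<noteq> a \<Longrightarrow> (x, a) \<in> r \<or> (a, x) \<in> r"
    "(a, a) \<in> r"
    by (auto dest: antisymD refl_onD simp: total_on_def)
  then show ?thesis
    unfolding underS_def by auto
qed

lemma wo_underS_mono:
  assumes "well_order r" and "(a, b) \<in> r"
  shows "underS r a \<subseteq> underS r b"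
  using assms by (intro underS_incr)
    (auto simp: well_order_on_def linear_order_on_def partial_order_on_def preorder_on_def)

lemma wo_underS_trans:
  assumes "well_order r" and "x \<in> underS r a" and "a \<in> underS r b"
  shows "x \<in> underS r b"
proof -
  have "(a, b) \<in> r" using assms(3) by (simp add: underS_def)
  then show ?thesis using wo_underS_mono[OF assms(1)] assms(2) by blast
qed

lemma finite_ordLess_infinite2:
  assumes "finite A" and "infinite B"
  shows "|A| <o |B|"
  using assms finite_ordLess_infinite[OF card_of_Well_order card_of_Well_order]
  by (simp add: Field_card_of)

lemma card_of_Times_ordLess_infinite:
  assumes "infinite C" and "|A| <o |C|" and "|B| <o |C|"
  shows "|A \<times> B| <o |C|"
proof (cases "finite (A \<times> B)")
  case True
  then show ?thesis using assms(1) by (rule finite_ordLess_infinite2)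
next
  case infinite: False
  then have ne: "A \<noteq> {}" "B \<noteq> {}" by auto
  consider "|B| \<le>o |A|" | "|A| \<le>o |B|"
    using ordLeq_total[OF card_of_Well_order card_of_Well_order] by blast
  then show ?thesis
  proof cases
    case 1
    then have "infinite A" using infinite finite_cartesian_product card_of_ordLeq_finite[OF 1] by blast
    then have "|A \<times> B| =o |A|" using card_of_Times_infinite[OF _ ne(2) 1] by blast
    then show ?thesis using assms(2) ordIso_ordLess_trans by blast
  next
    case 2
    then have "infinite B" using infinite finite_cartesian_product card_of_ordLeq_finite[OF 2] by blast
    then have "|A \<times> B| =o |B|" using card_of_Times_infinite[OF _ ne(1) 2] by blast
    then show ?thesis using assms(3) ordIso_ordLess_trans by blast
  qed
qed

lemma ordLess_underS_imp_ordLeq_underS: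
  assumes wo: "well_order r" and less: "|Y| <o |underS r m|"
  shows "\<exists>a \<in> underS r m. |Y| \<le>o |underS r a|"
proof -
  define W where "W = Restr r (underS r m)"
  have "Well_order r" using wo by (metis well_order_on_Field)
  then have W: "Well_order W" unfolding W_def by (rule Well_order_Restr)
  have FW: "Field W = underS r m"
    using wo by (auto simp: W_def Field_def well_order_on_def linear_order_on_def
        partial_order_on_def preorder_on_def refl_on_def)
  have "|underS r m| \<le>o W" using card_of_least W FW by fastforce
  then have "|Y| <o W" using less ordLess_ordLeq_trans by blast
  then obtain a where a: "a \<in> Field W" and iso: "|Y| =o Restr W (underS W a)"
    using ordLess_iff_ordIso_Restr[OF W card_of_Well_order] by blast
  have "|Y| \<le>o |Field (Restr W (underS W a))|"
    using card_of_mono2[OF ordIso_imp_ordLeq[OF iso]] by (simp add: Field_card_of)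
  also have "|Field (Restr W (underS W a))| \<le>o |underS r a|"
    by (rule card_of_mono1) (auto simp: W_def Field_def underS_def)
  finally show ?thesis using a FW by auto
qed

lemma regular_card_bounded:
  assumes wo: "well_order r" and reg: "regular_card r l"
    and X: "X \<subseteq> underS r l" and small: "|X| <o |underS r l|"
  shows "\<exists>x \<in> underS r l. X \<subseteq> underS r x"
proof -
  have "\<not> unbounded_in r X l"
    using reg small not_ordLess_ordIso by (auto simp: regular_card_def)
  then obtain a where "a \<in> underS r l" "\<forall>b \<in> X. (a, b) \<notin> r"
    using X by (auto simp: unbounded_in_def)
  then show ?thesis using wo_in_underS_iff[OF wo] by blast
qed

lemma regular_card_pigeonhole:
  assumes wo: "well_order r" and reg: "regular_card r l" and J: "unbounded_in r J l"
    and g: "g ` J \<subseteq> V" and small: "|V| <o |underS r l|"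
  shows "\<exists>v \<in> V. unbounded_in r {x \<in> J. g x = v} l"
proof (rule ccontr)
  assume none: "\<not> ?thesis"
  have "\<exists>b \<in> underS r l. \<forall>x \<in> J. g x = v \<longrightarrow> (b, x) \<notin> r" if "v \<in> V" for v
  proof -
    have "{x \<in> J. g x = v} \<subseteq> underS r l" using J by (auto simp: unbounded_in_def)
    then show ?thesis using none that unfolding unbounded_in_def by blast
  qed
  then obtain bound where bound: "\<forall>v \<in> V. bound v \<in> underS r l \<and> (\<forall>x \<in> J. g x = v \<longrightarrow> (bound v, x) \<notin> r)"
    by metis
  have "|bound ` V| <o |underS r l|" using card_of_image ordLeq_ordLess_trans small by blast
  then obtain c where c: "c \<in> underS r l" "bound ` V \<subseteq> underS r c"
    using regular_card_bounded[OF wo reg] bound by blast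
  obtain x where x: "x \<in> J" "(c, x) \<in> r" using J c(1) by (auto simp: unbounded_in_def)
  have "x \<in> underS r (bound (g x))" using bound g x(1) wo_in_underS_iff[OF wo] by blast
  then have "x \<in> underS r c" using c(2) g x(1) wo_underS_trans[OF wo] by blast
  then show False using x(2) wo_in_underS_iff[OF wo] by blast
qed

lemma is_card_succ_regular:
  assumes wo: "well_order r" and inf: "infinite_card r m" and succ: "is_card_succ r m l"
  shows "regular_card r l"
proof -
  have l: "ord_card r l" and ml: "m \<in> underS r l"
    and below: "\<forall>g \<in> underS r l. |underS r g| \<le>o |underS r m|"
    using succ by (auto simp: is_card_succ_def)
  have infm: "infinite (underS r m)" using inf by (simp add: infinite_card_def)
  have "underS r m \<subseteq> underS r l" using wo_underS_trans[OF wo _ ml] by blast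
  then have infl: "infinite (underS r l)" using infm finite_subset by blast
  have "|A| =o |underS r l|" if A: "unbounded_in r A l" for A
  proof (rule ccontr)
    assume not_iso: "\<not> |A| =o |underS r l|"
    have Al: "A \<subseteq> underS r l" using A by (simp add: unbounded_in_def)
    have "|A| <o |underS r l|"
      using card_of_mono1[OF Al] not_iso by (simp add: ordLeq_iff_ordLess_or_ordIso)
    then obtain g where "g \<in> underS r l" "|A| \<le>o |underS r g|"
      using ordLess_underS_imp_ordLeq_underS[OF wo] by blast
    then have Am: "|A| \<le>o |underS r m|" using below ordLeq_transitive by blast
    have "|{a} \<union> underS r a| \<le>o |underS r m|" if "a \<in> A" for a
    proof (rule card_of_Un_ordLeq_infinite_Field)
      show "|{a}| \<le>o |underS r m|" using infm by (intro card_of_singl_ordLeq) auto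
      show "|underS r a| \<le>o |underS r m|" using below Al that by blast
    qed (use infm in \<open>auto simp: Field_card_of card_of_card_order_on\<close>)
    then have union: "|\<Union>a \<in> A. {a} \<union> underS r a| \<le>o |underS r m|"
      by (intro card_of_UNION_ordLeq_infinite[OF infm Am]) blast
    have cover: "underS r l \<subseteq> (\<Union>a \<in> A. {a} \<union> underS r a)"
    proof
      fix x assume "x \<in> underS r l"
      then obtain a where "a \<in> A" "(x, a) \<in> r" using A by (auto simp: unbounded_in_def)
      then show "x \<in> (\<Union>a \<in> A. {a} \<union> underS r a)" by (auto simp: underS_def)
    qed
    have "|underS r l| \<le>o |underS r m|"
      using ordLeq_transitive[OF card_of_mono1[OF cover] union] .
    moreover have "|underS r m| <o |underS r l|" using l ml by (simp add: ord_card_def)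
    ultimately show False using not_ordLess_ordLeq by blast
  qed
  then show ?thesis using l infl by (simp add: regular_card_def infinite_card_def)
qed

lemma
  assumes "complete_ultrafilter r k P U"
  shows complete_ultrafilter_subset_Pow: "U \<subseteq> Pow P"
    and complete_ultrafilter_carrier: "P \<in> U"
    and complete_ultrafilter_empty: "{} \<notin> U"
    and complete_ultrafilter_upward: "A \<in> U \<Longrightarrow> A \<subseteq> B \<Longrightarrow> B \<subseteq> P \<Longrightarrow> B \<in> U"
    and complete_ultrafilter_ultra: "A \<subseteq> P \<Longrightarrow> A \<in> U \<or> P - A \<in> U"
    and complete_ultrafilter_Inter: "F \<subseteq> U \<Longrightarrow> F \<noteq> {} \<Longrightarrow> |F| <o |underS r k| \<Longrightarrow> \<Inter>F \<in> U"
  using assms by (simp_all add: complete_ultrafilter_def)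

lemma complete_ultrafilter_Int:
  assumes U: "complete_ultrafilter r k P U" and inf: "infinite (underS r k)"
    and "A \<in> U" and "B \<in> U"
  shows "A \<inter> B \<in> U"
  using complete_ultrafilter_Inter[OF U, of "{A, B}"] assms(3,4) inf
  by (simp add: finite_ordLess_infinite2)

lemma complete_ultrafilter_fibre:
  assumes U: "complete_ultrafilter r k P U" and inf: "infinite (underS r k)"
    and X: "X \<in> U" and g: "g ` X \<subseteq> V" and small: "|V| <o |underS r k|"
  shows "\<exists>v \<in> V. {x \<in> X. g x = v} \<in> U"
proof (rule ccontr)
  assume none: "\<not> ?thesis"
  have "X \<subseteq> P" using complete_ultrafilter_subset_Pow[OF U] X by blast
  then have co: "P - {x \<in> X. g x = v} \<in> U" if "v \<in> V" for v
    using complete_ultrafilter_ultra[OF U, of "{x \<in> X. g x = v}"] none that by blast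
  define F where "F = {X} \<union> (\<lambda>v. P - {x \<in> X. g x = v}) ` V"
  have "|(\<lambda>v. P - {x \<in> X. g x = v}) ` V| <o |underS r k|"
    using card_of_image small ordLeq_ordLess_trans by blast
  moreover have "|{X}| <o |underS r k|" using inf by (simp add: finite_ordLess_infinite2)
  ultimately have small_F: "|F| <o |underS r k|"
    unfolding F_def using card_of_Un_ordLess_infinite[OF inf] by blast
  have "F \<subseteq> U" and "F \<noteq> {}" unfolding F_def using X co by blast+
  then have "\<Inter>F \<in> U" using complete_ultrafilter_Inter[OF U _ _ small_F] by blast
  then have "\<Inter>F \<noteq> {}" using complete_ultrafilter_empty[OF U] by metis
  then obtain x where x: "x \<in> \<Inter>F" by blast
  then have "x \<in> X" by (simp add: F_def)
  moreover from this have "P - {y \<in> X. g y = g x} \<in> F" using g unfolding F_def by blast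
  ultimately show False using x by blast
qed

lemma complete_ultrafilter_vimage:
  assumes U: "complete_ultrafilter r k P U" and f: "f ` P \<subseteq> Q"
  shows "complete_ultrafilter r k Q {B. B \<subseteq> Q \<and> f -` B \<inter> P \<in> U}"
    (is "complete_ultrafilter r k Q ?V")
proof -
  have Inter: "\<Inter>F \<in> ?V" if F: "F \<subseteq> ?V" "F \<noteq> {}" "|F| <o |underS r k|" for F
  proof -
    have "|(\<lambda>B. f -` B \<inter> P) ` F| <o |underS r k|"
      using card_of_image F(3) ordLeq_ordLess_trans by blast
    moreover have "(\<lambda>B. f -` B \<inter> P) ` F \<subseteq> U" and "(\<lambda>B. f -` B \<inter> P) ` F \<noteq> {}"
      using F(1,2) by blast+
    ultimately have "\<Inter>((\<lambda>B. f -` B \<inter> P) ` F) \<in> U"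
      using complete_ultrafilter_Inter[OF U] by blast
    moreover have "\<Inter>((\<lambda>B. f -` B \<inter> P) ` F) = f -` \<Inter>F \<inter> P" using F(2) by blast
    moreover have "\<Inter>F \<subseteq> Q" using F(1,2) by blast
    ultimately show ?thesis by simp
  qed
  have upward: "B \<in> ?V" if "A \<in> ?V" "A \<subseteq> B" "B \<subseteq> Q" for A B
    using that complete_ultrafilter_upward[OF U, of "f -` A \<inter> P" "f -` B \<inter> P"] by blast
  have ultra: "A \<in> ?V \<or> Q - A \<in> ?V" if "A \<subseteq> Q" for A
  proof -
    have "P - f -` A \<inter> P = f -` (Q - A) \<inter> P" using f by blast
    then show ?thesis using that complete_ultrafilter_ultra[OF U, of "f -` A \<inter> P"] by auto
  qed
  have "f -` Q \<inter> P = P" using f by blast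
  then have "Q \<in> ?V" using complete_ultrafilter_carrier[OF U] by simp
  moreover have "{} \<notin> ?V" using complete_ultrafilter_empty[OF U] by simp
  ultimately show ?thesis
    unfolding complete_ultrafilter_def using Inter upward ultra by blast
qed

lemma strongly_compact_uniform_ultrafilter:
  assumes wo: "well_order r" and sc: "strongly_compact r n" and reg: "regular_card r l"
    and nl: "n \<in> underS r l" and I: "unbounded_in r I l"
  shows "\<exists>U. complete_ultrafilter r n I U \<and> (\<forall>a \<in> I. {b \<in> I. a \<in> underS r b} \<in> U)"
proof -
  obtain U0 where U0: "fine_measure r n I U0" using sc by (auto simp: strongly_compact_def)
  define P where "P = P_kappa r n I"
  have cu: "complete_ultrafilter r n P U0" and fine: "\<forall>x \<in> I. {a \<in> P. x \<in> a} \<in> U0"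
    using U0 by (simp_all add: fine_measure_def P_def)
  have "|underS r n| <o |underS r l|" using reg nl by (simp add: regular_card_def infinite_card_def ord_card_def)
  then have "\<exists>i \<in> I. a \<subseteq> underS r i" if "a \<in> P" for a
  proof -
    have aI: "a \<subseteq> I" and "|a| <o |underS r n|" using that by (simp_all add: P_def P_kappa_def)
    then have "|a| <o |underS r l|" using \<open>|underS r n| <o |underS r l|\<close> ordLess_transitive by blast
    moreover have "a \<subseteq> underS r l" using aI I by (auto simp: unbounded_in_def)
    ultimately obtain x where "x \<in> underS r l" "a \<subseteq> underS r x"
      using regular_card_bounded[OF wo reg] by blast
    moreover obtain i where "i \<in> I" "(x, i) \<in> r" using I \<open>x \<in> underS r l\<close> by (auto simp: unbounded_in_def)
    ultimately show ?thesis using wo_underS_mono[OF wo] by blast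
  qed
  then obtain f where f: "\<forall>a \<in> P. f a \<in> I \<and> a \<subseteq> underS r (f a)" by metis
  define U where "U = {B. B \<subseteq> I \<and> f -` B \<inter> P \<in> U0}"
  have "complete_ultrafilter r n I U"
    unfolding U_def by (rule complete_ultrafilter_vimage[OF cu]) (use f in blast)
  moreover have "{b \<in> I. a \<in> underS r b} \<in> U" if "a \<in> I" for a
  proof -
    have "{c \<in> P. a \<in> c} \<subseteq> f -` {b \<in> I. a \<in> underS r b} \<inter> P" using f by blast
    then have "f -` {b \<in> I. a \<in> underS r b} \<inter> P \<in> U0"
      using complete_ultrafilter_upward[OF cu] fine that by blast
    then show ?thesis by (simp add: U_def)
  qed
  ultimately show ?thesis by blast
qed

lemma singular_card_small_cofinal:
  assumes "singular_card r m"
  shows "\<exists>A. unbounded_in r A m \<and> |A| <o |underS r m|"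
proof -
  obtain A where A: "unbounded_in r A m" and "\<not> |A| =o |underS r m|"
    using assms by (auto simp: singular_card_def regular_card_def)
  moreover have "|A| \<le>o |underS r m|" using A by (intro card_of_mono1) (simp add: unbounded_in_def)
  ultimately show ?thesis by (auto simp: ordLeq_iff_ordLess_or_ordIso)
qed

lemma singular_limit_strongly_compact_above:
  assumes wo: "well_order r" and sl: "singular_limit_of_strongly_compacts r m"
    and small: "|Y| <o |underS r m|"
  shows "\<exists>n \<in> underS r m. strongly_compact r n \<and> |Y| <o |underS r n|"
proof -
  obtain a where a: "a \<in> underS r m" "|Y| \<le>o |underS r a|"
    using ordLess_underS_imp_ordLeq_underS[OF wo small] by blast
  then obtain n where n: "n \<in> underS r m" "a \<in> underS r n" "strongly_compact r n"
    using sl by (auto simp: singular_limit_of_strongly_compacts_def)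
  then have "|underS r a| <o |underS r n|"
    by (simp add: strongly_compact_def regular_card_def infinite_card_def ord_card_def)
  then show ?thesis using n a(2) ordLeq_ordLess_trans by blast
qed

lemma exists_map_to_cofinal_small_fibres:
  assumes m: "infinite_card r m" and A: "unbounded_in r A m"
    and K: "|K| \<le>o |underS r m|"
  shows "\<exists>p. p ` K \<subseteq> A \<and> (\<forall>q \<in> A. |{d \<in> K. p d = q}| <o |underS r m| )"
proof -
  obtain h where h: "inj_on h K" "h ` K \<subseteq> underS r m"
    using K unfolding card_of_ordLeq[symmetric] by blast
  have "\<exists>q \<in> A. (h d, q) \<in> r" if "d \<in> K" for d
    using A h(2) that unfolding unbounded_in_def by blast
  then obtain p where p: "\<forall>d \<in> K. p d \<in> A \<and> (h d, p d) \<in> r" by metis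
  have "|{d \<in> K. p d = q}| <o |underS r m|" if q: "q \<in> A" for q
  proof -
    have "inj_on h {d \<in> K. p d = q}" using h(1) by (rule inj_on_subset) blast
    moreover have "h ` {d \<in> K. p d = q} \<subseteq> {q} \<union> underS r q" using p by (auto simp: underS_def)
    ultimately have "|{d \<in> K. p d = q}| \<le>o |{q} \<union> underS r q|"
      unfolding card_of_ordLeq[symmetric] by blast
    moreover have "|{q} \<union> underS r q| <o |underS r m|"
    proof (rule card_of_Un_ordLess_infinite)
      show "infinite (underS r m)" using m by (simp add: infinite_card_def)
      then show "|{q}| <o |underS r m|" by (simp add: finite_ordLess_infinite2)
      have "q \<in> underS r m" using A q by (auto simp: unbounded_in_def)
      then show "|underS r q| <o |underS r m|" using m by (simp add: infinite_card_def ord_card_def)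
    qed
    ultimately show ?thesis using ordLeq_ordLess_trans by blast
  qed
  then show ?thesis using p by blast
qed

lemma singular_limit_small_partition:
  assumes wo: "well_order r" and sl: "singular_limit_of_strongly_compacts r m"
    and K: "|K| \<le>o |underS r m|" and Y: "|Y| <o |underS r m|"
  shows "\<exists>A p n. A \<subseteq> underS r m \<and> p ` K \<subseteq> A \<and> (\<forall>q \<in> A. |{d \<in> K. p d = q}| <o |underS r m| ) \<and>
    n \<in> underS r m \<and> strongly_compact r n \<and> |A \<times> Y| <o |underS r n|"
proof -
  have m: "infinite_card r m" "singular_card r m"
    using sl by (simp_all add: singular_limit_of_strongly_compacts_def singular_card_def)
  obtain A where A: "unbounded_in r A m" "|A| <o |underS r m|"
    using singular_card_small_cofinal[OF m(2)] by blast
  obtain p where p: "p ` K \<subseteq> A" "\<forall>q \<in> A. |{d \<in> K. p d = q}| <o |underS r m|"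
    using exists_map_to_cofinal_small_fibres[OF m(1) A(1) K] by blast
  have "|A \<times> Y| <o |underS r m|"
    using m(1) A(2) Y by (simp add: infinite_card_def card_of_Times_ordLess_infinite)
  then obtain n where n: "n \<in> underS r m" "strongly_compact r n" "|A \<times> Y| <o |underS r n|"
    using singular_limit_strongly_compact_above[OF wo sl] by blast
  show ?thesis
    using A(1) p n by (intro exI[of _ A] exI[of _ p] exI[of _ n]) (simp add: unbounded_in_def)
qed

lemma tree_like_lower_levels_comparable:
  assumes wo: "well_order r" and tree: "tree_like R"
    and levels: "\<forall>a0 b0 a1 b1. ((a0, b0), (a1, b1)) \<in> R \<longrightarrow> a0 \<in> underS r a1"
    and x: "((a, d), z) \<in> R" and y: "((a', d'), z) \<in> R" and less: "a \<in> underS r a'"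
  shows "((a, d), (a', d')) \<in> R"
proof -
  have "((a', d'), (a, d)) \<notin> R"
    using levels less wo_in_underS_iff[OF wo] by (metis underS_E)
  moreover have "(a, d) \<noteq> (a', d')" using less by (auto simp: underS_def)
  ultimately show ?thesis using tree x y unfolding tree_like_def by blast
qed

lemma strongly_compact_coherent_colouring:
  assumes wo: "well_order r" and reg: "regular_card r l" and sc: "strongly_compact r n"
    and nl: "n \<in> underS r l" and J: "unbounded_in r J l" and small: "|V| <o |underS r n|"
    and colour: "\<forall>a \<in> J. \<forall>b \<in> J. a \<in> underS r b \<longrightarrow> c a b \<in> V"
  shows "\<exists>v \<in> V. \<exists>J' \<subseteq> J. unbounded_in r J' l \<and>
    (\<forall>a \<in> J'. \<forall>a' \<in> J'. \<exists>b \<in> J. a \<in> underS r b \<and> a' \<in> underS r b \<and> c a b = v \<and> c a' b = v)"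
proof -
  obtain U where U: "complete_ultrafilter r n J U" and tails: "\<forall>a \<in> J. {b \<in> J. a \<in> underS r b} \<in> U"
    using strongly_compact_uniform_ultrafilter[OF wo sc reg nl J] by blast
  have infn: "infinite (underS r n)" using sc by (simp add: strongly_compact_def regular_card_def infinite_card_def)
  define tail where "tail a = {b \<in> J. a \<in> underS r b}" for a
  have "\<exists>v \<in> V. {b \<in> tail a. c a b = v} \<in> U" if "a \<in> J" for a
    using complete_ultrafilter_fibre[OF U infn _ _ small] tails colour that unfolding tail_def by blast
  then obtain val where val: "\<forall>a \<in> J. val a \<in> V \<and> {b \<in> tail a. c a b = val a} \<in> U" by metis
  have "|underS r n| <o |underS r l|" using reg nl by (simp add: regular_card_def infinite_card_def ord_card_def)
  then have "|V| <o |underS r l|" using small ordLess_transitive by blast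
  then obtain v where v: "v \<in> V" and unb: "unbounded_in r {a \<in> J. val a = v} l"
    using regular_card_pigeonhole[OF wo reg J, of val V] val by blast
  have "\<exists>b \<in> J. a \<in> underS r b \<and> a' \<in> underS r b \<and> c a b = v \<and> c a' b = v"
    if "a \<in> J" "a' \<in> J" "val a = v" "val a' = v" for a a'
  proof -
    have "{b \<in> tail a. c a b = v} \<inter> {b \<in> tail a'. c a' b = v} \<in> U"
      using complete_ultrafilter_Int[OF U infn] val that by metis
    then have "{b \<in> tail a. c a b = v} \<inter> {b \<in> tail a'. c a' b = v} \<noteq> {}"
      using complete_ultrafilter_empty[OF U] by metis
    then show ?thesis unfolding tail_def by blast
  qed
  then show ?thesis using v unb by (intro bexI[of _ v] exI[of _ "{a \<in> J. val a = v}"]) auto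
qed

lemma cofinal_branch_of_bounded_width:
  fixes W :: "'w set" and RR :: "('u \<times> 'w) rel set"
  assumes wo: "well_order r" and reg: "regular_card r l" and sc: "strongly_compact r n"
    and nl: "n \<in> underS r l" and J: "unbounded_in r J l"
    and small_W: "|W| <o |underS r n|" and small_RR: "|RR| <o |underS r n|"
    and tree: "\<forall>R \<in> RR. tree_like R"
    and linked: "\<forall>a \<in> J. \<forall>b \<in> J. a \<in> underS r b \<longrightarrow> (\<exists>d \<in> W. \<exists>d' \<in> W. \<exists>R \<in> RR. ((a, d), (b, d')) \<in> R)"
  shows "\<exists>R \<in> RR. \<exists>B \<subseteq> J \<times> W. (\<forall>x \<in> B. \<forall>y \<in> B. x = y \<or> (x, y) \<in> R \<or> (y, x) \<in> R) \<and>
    unbounded_in r (fst ` B) l"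
proof -
  define c where "c a b = (SOME t. t \<in> W \<times> W \<times> RR \<and> ((a, fst t), (b, fst (snd t))) \<in> snd (snd t))"
    for a b
  have c: "c a b \<in> W \<times> W \<times> RR \<and> ((a, fst (c a b)), (b, fst (snd (c a b)))) \<in> snd (snd (c a b))"
    if ab: "a \<in> J" "b \<in> J" "a \<in> underS r b" for a b
  proof -
    obtain d d' R where "d \<in> W" "d' \<in> W" "R \<in> RR" "((a, d), (b, d')) \<in> R" using linked ab by blast
    then have "\<exists>t. t \<in> W \<times> W \<times> RR \<and> ((a, fst t), (b, fst (snd t))) \<in> snd (snd t)"
      by (intro exI[of _ "(d, d', R)"]) simp
    then show ?thesis unfolding c_def by (rule someI_ex)
  qed
  have infn: "infinite (underS r n)" using sc by (simp add: strongly_compact_def regular_card_def infinite_card_def)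
  have small: "|W \<times> W \<times> RR| <o |underS r n|"
    using card_of_Times_ordLess_infinite[OF infn small_W card_of_Times_ordLess_infinite[OF infn small_W small_RR]] .
  have colour: "\<forall>a \<in> J. \<forall>b \<in> J. a \<in> underS r b \<longrightarrow> c a b \<in> W \<times> W \<times> RR"
    using c by simp
  obtain v J' where v: "v \<in> W \<times> W \<times> RR" and J': "J' \<subseteq> J" "unbounded_in r J' l"
    and common: "\<forall>a \<in> J'. \<forall>a' \<in> J'. \<exists>b \<in> J. a \<in> underS r b \<and> a' \<in> underS r b \<and> c a b = v \<and> c a' b = v"
    using strongly_compact_coherent_colouring[OF wo reg sc nl J small colour] by blast
  obtain d d' R where v_def: "v = (d, d', R)" and "d \<in> W" "R \<in> RR" using v by (cases v) auto
  define B where "B = (\<lambda>a. (a, d)) ` J'"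
  have "x = y \<or> (x, y) \<in> R \<or> (y, x) \<in> R" if xy_B: "x \<in> B" "y \<in> B" for x y
  proof -
    obtain a a' where "a \<in> J'" "a' \<in> J'" and xy: "x = (a, d)" "y = (a', d)"
      using xy_B unfolding B_def by blast
    then obtain b where "b \<in> J" "a \<in> underS r b" "a' \<in> underS r b" "c a b = v" "c a' b = v"
      using common by blast
    then have "(x, (b, d')) \<in> R" "(y, (b, d')) \<in> R"
      using c[of a b] c[of a' b] J'(1) \<open>a \<in> J'\<close> \<open>a' \<in> J'\<close> xy v_def by auto
    moreover have "tree_like R" using tree \<open>R \<in> RR\<close> by blast
    ultimately show ?thesis unfolding tree_like_def by blast
  qed
  moreover have "B \<subseteq> J \<times> W" using J'(1) \<open>d \<in> W\<close> unfolding B_def by blast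
  moreover have "fst ` B = J'" by (simp add: B_def image_image)
  ultimately show ?thesis using J'(2) \<open>R \<in> RR\<close> by blast
qed

lemma strong_lambda_system_predecessor:
  assumes "strong_lambda_system r l I k RR" and "d0 \<in> underS r k"
  shows "\<exists>pred. \<forall>a \<in> I. \<forall>b \<in> I. a \<in> underS r b \<longrightarrow>
    pred a b \<in> underS r k \<times> RR \<and> ((a, fst (pred a b)), (b, d0)) \<in> snd (pred a b)"
proof -
  have strong: "\<forall>a0 \<in> I. \<forall>a1 \<in> I. a0 \<in> underS r a1 \<longrightarrow>
      (\<forall>b1 \<in> underS r k. \<exists>b0 \<in> underS r k. \<exists>R \<in> RR. ((a0, b0), (a1, b1)) \<in> R)"
    using assms(1) by (simp add: strong_lambda_system_def)
  define pred where "pred a b = (SOME t. t \<in> underS r k \<times> RR \<and> ((a, fst t), (b, d0)) \<in> snd t)" for a b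
  have "pred a b \<in> underS r k \<times> RR \<and> ((a, fst (pred a b)), (b, d0)) \<in> snd (pred a b)"
    if ab: "a \<in> I" "b \<in> I" "a \<in> underS r b" for a b
  proof -
    obtain d R where "d \<in> underS r k" "R \<in> RR" "((a, d), (b, d0)) \<in> R"
      using strong ab assms(2) by blast
    then have "\<exists>t. t \<in> underS r k \<times> RR \<and> ((a, fst t), (b, d0)) \<in> snd t"
      by (intro exI[of _ "(d, R)"]) simp
    then show ?thesis unfolding pred_def by (rule someI_ex)
  qed
  then show ?thesis by blast
qed

lemma strong_system_narrow_subsystem:
  assumes wo: "well_order r" and sl: "singular_limit_of_strongly_compacts r m"
    and reg: "regular_card r l" and ml: "m \<in> underS r l" and sys: "strong_lambda_system r l I k RR"
    and small_k: "|underS r k| \<le>o |underS r m|" and small_RR: "|RR| <o |underS r m|"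
  shows "\<exists>R \<in> RR. \<exists>J \<subseteq> I. \<exists>W \<subseteq> underS r k. unbounded_in r J l \<and> |W| <o |underS r m| \<and>
    (\<forall>a \<in> J. \<forall>b \<in> J. a \<in> underS r b \<longrightarrow> (\<exists>d \<in> W. \<exists>d' \<in> W. ((a, d), (b, d')) \<in> R))"
proof -
  have I: "unbounded_in r I l" and "underS r k \<noteq> {}"
    and rels: "\<forall>R \<in> RR. tree_like R \<and> (\<forall>a0 b0 a1 b1. ((a0, b0), (a1, b1)) \<in> R \<longrightarrow> a0 \<in> underS r a1)"
    using sys by (simp_all add: strong_lambda_system_def lambda_system_def)
  then obtain d0 where d0: "d0 \<in> underS r k" by blast
  obtain A p n where "A \<subseteq> underS r m"
    and p: "p ` underS r k \<subseteq> A" "\<forall>q \<in> A. |{d \<in> underS r k. p d = q}| <o |underS r m|"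
    and n: "n \<in> underS r m" "strongly_compact r n" "|A \<times> RR| <o |underS r n|"
    using singular_limit_small_partition[OF wo sl small_k small_RR] by blast
  have nl: "n \<in> underS r l" using wo_underS_trans[OF wo n(1) ml] .
  obtain pred where pred: "\<forall>a \<in> I. \<forall>b \<in> I. a \<in> underS r b \<longrightarrow>
      pred a b \<in> underS r k \<times> RR \<and> ((a, fst (pred a b)), (b, d0)) \<in> snd (pred a b)"
    using strong_lambda_system_predecessor[OF sys d0] by blast
  define c where "c a b = (p (fst (pred a b)), snd (pred a b))" for a b
  have colour: "\<forall>a \<in> I. \<forall>b \<in> I. a \<in> underS r b \<longrightarrow> c a b \<in> A \<times> RR"
    using pred p(1) unfolding c_def by fastforce
  obtain v J where "v \<in> A \<times> RR" and J: "J \<subseteq> I" "unbounded_in r J l"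
    and common: "\<forall>a \<in> J. \<forall>a' \<in> J. \<exists>b \<in> I. a \<in> underS r b \<and> a' \<in> underS r b \<and> c a b = v \<and> c a' b = v"
    using strongly_compact_coherent_colouring[OF wo reg n(2) nl I n(3) colour] by blast
  then obtain q R where v: "v = (q, R)" and "q \<in> A" "R \<in> RR" by (cases v) auto
  define W where "W = {d \<in> underS r k. p d = q}"
  have linked: "\<exists>d \<in> W. \<exists>d' \<in> W. ((a, d), (a', d')) \<in> R"
    if aa': "a \<in> J" "a' \<in> J" "a \<in> underS r a'" for a a'
  proof -
    obtain b where b: "b \<in> I" "a \<in> underS r b" "a' \<in> underS r b" and "c a b = v" "c a' b = v"
      using common aa'(1,2) by blast
    moreover have "a \<in> I" "a' \<in> I" using J(1) aa'(1,2) by blast+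
    with b have "pred a b \<in> underS r k \<times> RR \<and> ((a, fst (pred a b)), (b, d0)) \<in> snd (pred a b)"
      and "pred a' b \<in> underS r k \<times> RR \<and> ((a', fst (pred a' b)), (b, d0)) \<in> snd (pred a' b)"
      using pred by blast+
    ultimately have W: "fst (pred a b) \<in> W" "fst (pred a' b) \<in> W"
      and below_b: "((a, fst (pred a b)), (b, d0)) \<in> R" "((a', fst (pred a' b)), (b, d0)) \<in> R"
      using v by (auto simp: c_def W_def)
    have "tree_like R" and "\<forall>a0 b0 a1 b1. ((a0, b0), (a1, b1)) \<in> R \<longrightarrow> a0 \<in> underS r a1"
      using rels \<open>R \<in> RR\<close> by blast+
    from tree_like_lower_levels_comparable[OF wo this below_b aa'(3)] show ?thesis using W by blast
  qed
  have "|W| <o |underS r m|" using p(2) \<open>q \<in> A\<close> by (simp add: W_def)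
  moreover have "W \<subseteq> underS r k" by (simp add: W_def)
  ultimately show ?thesis
    using J \<open>R \<in> RR\<close> linked by (intro bexI[of _ R] exI[of _ J] conjI exI[of _ W]) simp_all
qed

lemma strong_system_cofinal_branch:
  assumes wo: "well_order r" and sl: "singular_limit_of_strongly_compacts r m"
    and reg: "regular_card r l" and ml: "m \<in> underS r l" and sys: "strong_lambda_system r l I k RR"
    and small_k: "|underS r k| \<le>o |underS r m|" and small_RR: "|RR| <o |underS r m|"
  shows "has_cofinal_branch r l I k RR"
proof -
  obtain R J W where R: "R \<in> RR" and J: "J \<subseteq> I" "unbounded_in r J l"
    and W: "W \<subseteq> underS r k" "|W| <o |underS r m|"
    and linked: "\<forall>a \<in> J. \<forall>b \<in> J. a \<in> underS r b \<longrightarrow> (\<exists>d \<in> W. \<exists>d' \<in> W. ((a, d), (b, d')) \<in> R)"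
    using strong_system_narrow_subsystem[OF assms] by blast
  obtain n where n: "n \<in> underS r m" "strongly_compact r n" "|W| <o |underS r n|"
    using singular_limit_strongly_compact_above[OF wo sl W(2)] by blast
  have small_R: "|{R}| <o |underS r n|"
    using n(2) by (simp add: finite_ordLess_infinite2 strongly_compact_def regular_card_def infinite_card_def)
  have tree: "\<forall>R' \<in> {R}. tree_like R'"
    using sys R by (simp add: strong_lambda_system_def lambda_system_def)
  have linked_R: "\<forall>a \<in> J. \<forall>b \<in> J. a \<in> underS r b \<longrightarrow> (\<exists>d \<in> W. \<exists>d' \<in> W. \<exists>R' \<in> {R}. ((a, d), (b, d')) \<in> R')"
    using linked by simp
  obtain B where B: "B \<subseteq> J \<times> W" "\<forall>x \<in> B. \<forall>y \<in> B. x = y \<or> (x, y) \<in> R \<or> (y, x) \<in> R"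
    and unbounded: "unbounded_in r (fst ` B) l"
    using cofinal_branch_of_bounded_width[OF wo reg n(2) wo_underS_trans[OF wo n(1) ml] J(2) n(3) small_R tree linked_R]
    by blast
  have "is_branch r I k R B" using B J(1) W(1) unfolding is_branch_def by blast
  moreover have "{a \<in> I. \<exists>c. (a, c) \<in> B} = fst ` B" using B(1) J(1) by force
  ultimately show ?thesis
    using R unbounded unfolding has_cofinal_branch_def by (intro bexI[of _ R] exI[of _ B]) simp_all
qed

lemma singular_limit_succ_strong_system_property:
  assumes wo: "well_order r" and sl: "singular_limit_of_strongly_compacts r m"
    and succ: "is_card_succ r m l"
  shows "strong_system_property r l"
proof -
  have "infinite_card r m"
    using sl by (simp add: singular_limit_of_strongly_compacts_def singular_card_def)
  then have reg: "regular_card r l" using is_card_succ_regular[OF wo _ succ] by blast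
  have ml: "m \<in> underS r l" and below: "\<forall>g \<in> underS r l. |underS r g| \<le>o |underS r m|"
    using succ by (simp_all add: is_card_succ_def)
  show ?thesis
    unfolding strong_system_property_def
  proof (intro conjI allI impI reg)
    fix I k \<R>
    assume "strong_lambda_system r l I k \<R> \<and> (\<exists>g \<in> underS r l. |\<R>| <o |underS r g| )"
    then obtain g where sys: "strong_lambda_system r l I k \<R>" and g: "g \<in> underS r l" "|\<R>| <o |underS r g|"
      by blast
    have "k \<in> underS r l" using sys by (simp add: strong_lambda_system_def lambda_system_def)
    then have "|underS r k| \<le>o |underS r m|" using below by blast
    moreover have "|\<R>| <o |underS r m|" using g below ordLess_ordLeq_trans by blast
    ultimately show "has_cofinal_branch r l I k \<R>"
      using strong_system_cofinal_branch[OF wo sl reg ml sys] by blast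
  qed
qed

theorem mainTheorem6:
  fixes r :: "'u rel" and m :: 'u
  assumes "well_order r"
    and "singular_limit_of_strongly_compacts r m"
  shows "(\<forall>l I k \<R>. regular_card r l \<and> m \<in> underS r l \<and> strong_lambda_system r l I k \<R> \<and>
            (k, m) \<in> r \<and> |\<R>| <o |underS r m| \<longrightarrow> has_cofinal_branch r l I k \<R>) \<and>
         (\<forall>l. is_card_succ r m l \<longrightarrow> strong_system_property r l)"
proof (intro conjI allI impI)
  fix l I k \<R>
  assume H: "regular_card r l \<and> m \<in> underS r l \<and> strong_lambda_system r l I k \<R> \<and>
    (k, m) \<in> r \<and> |\<R>| <o |underS r m|"
  then have "|underS r k| \<le>o |underS r m|" using card_of_mono1 wo_underS_mono[OF assms(1)] by blast
  then show "has_cofinal_branch r l I k \<R>" using strong_system_cofinal_branch[OF assms] H by blast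
next
  fix l
  assume "is_card_succ r m l"
  then show "strong_system_property r l" by (rule singular_limit_succ_strong_system_property[OF assms])
qed

end
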